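(* An undirected graph $G=(V,E)$ is a Generalized Bartlett graph if and only if $G$ has a decomposable cover $\widetilde G=(V,\widetilde E)$ such that every triangle in $\widetilde E$ contains an edge from $E$; i.e., for any $u,v,w\in V$ with $\{u,v\},\{v,w\},\{u,w\}\in\widetilde E$, at least one of $\{u,v\},\{v,w\},\{u,w\}$ belongs to $E$.
   Context: A graph is decomposable if it has no induced cycle of length $\ge4$; a decomposable cover of $G=(V,E)$ is a decomposable graph $(V,\widetilde E)$ with $E\subset\widetilde E$. For an ordering $\sigma:V\to\{1,\dots,p\}$ ($p=|V|$), set $E^\sigma_0=E$ and for $i=1,\dots,p-2$, $E^\sigma_i=E^\sigma_{i-1}\cup\{\{u,v\}:u\ne v,\sigma(u)>i,\sigma(v)>i,\{u,\sigma^{-1}(i)\},\{v,\sigma^{-1}(i)\}\in E^\sigma_{i-1}\}$; $D^\sigma(E)=E^\sigma_{p-2}$. $G$ is a Generalized Bartlett graph if there exists an ordering $\sigma$ such that there are no $u,v,w\in V$ with $\{u,v\},\{v,w\},\{u,w\}\notin E$ but $\{u,v\},\{v,w\},\{u,w\}\in D^\sigma(E)$. *)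

theory Defs
  imports Main
begin

definition is_graph :: "'a set \<Rightarrow> 'a set set \<Rightarrow> bool" where
  "is_graph V E \<longleftrightarrow> finite V \<and> (\<forall>e\<in>E. e \<subseteq> V \<and> card e = 2)"

definition induced_cycle :: "'a set \<Rightarrow> 'a set set \<Rightarrow> 'a list \<Rightarrow> bool" where
  "induced_cycle V E cs \<longleftrightarrow>
     (let n = length cs in
       n \<ge> 4 \<and> distinct cs \<and> set cs \<subseteq> V \<and>
       (\<forall>i<n. {cs ! i, cs ! ((i + 1) mod n)} \<in> E) \<and>
       (\<forall>i<n. \<forall>j<n. {cs ! i, cs ! j} \<in> E \<longrightarrow>
            (i + 1) mod n = j \<or> (j + 1) mod n = i))"

definition decomposable :: "'a set \<Rightarrow> 'a set set \<Rightarrow> bool" where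
  "decomposable V E \<longleftrightarrow> is_graph V E \<and> (\<nexists>cs. induced_cycle V E cs)"

definition decomposable_cover :: "'a set \<Rightarrow> 'a set set \<Rightarrow> 'a set set \<Rightarrow> bool" where
  "decomposable_cover V E Et \<longleftrightarrow> decomposable V Et \<and> E \<subseteq> Et"

definition is_ordering :: "'a set \<Rightarrow> ('a \<Rightarrow> nat) \<Rightarrow> bool" where
  "is_ordering V \<sigma> \<longleftrightarrow> bij_betw \<sigma> V {1..card V}"

fun elim_edges :: "'a set \<Rightarrow> ('a \<Rightarrow> nat) \<Rightarrow> 'a set set \<Rightarrow> nat \<Rightarrow> 'a set set" where
  "elim_edges V \<sigma> E 0 = E"
| "elim_edges V \<sigma> E (Suc i) =
     (let Ep = elim_edges V \<sigma> E i; x = inv_into V \<sigma> (Suc i) in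
       Ep \<union> {{u, v} | u v. u \<in> V \<and> v \<in> V \<and> u \<noteq> v \<and> \<sigma> u > Suc i \<and> \<sigma> v > Suc i
                          \<and> {u, x} \<in> Ep \<and> {v, x} \<in> Ep})"

definition D_sigma :: "'a set \<Rightarrow> ('a \<Rightarrow> nat) \<Rightarrow> 'a set set \<Rightarrow> 'a set set" where
  "D_sigma V \<sigma> E = elim_edges V \<sigma> E (card V - 2)"

definition generalized_bartlett :: "'a set \<Rightarrow> 'a set set \<Rightarrow> bool" where
  "generalized_bartlett V E \<longleftrightarrow>
     (\<exists>\<sigma>. is_ordering V \<sigma> \<and>
        \<not> (\<exists>u v w. {u, v} \<notin> E \<and> {v, w} \<notin> E \<and> {u, w} \<notin> E \<and>
                   {u, v} \<in> D_sigma V \<sigma> E \<and> {v, w} \<in> D_sigma V \<sigma> E \<and> {u, w} \<in> D_sigma V \<sigma> E))"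

end

theory Submission
  imports Defs
begin

text \<open>
  If \<open>\<sigma>\<close> witnesses the Generalized Bartlett property, the fill-in graph \<open>D\<^sup>\<sigma>(E)\<close> is itself the
  required cover: it is decomposable because on any cycle of length \<open>\<ge> 4\<close> the vertex eliminated
  first has its two cycle neighbours joined when it is eliminated, which gives a chord; and the
  Bartlett condition says precisely that every triangle of \<open>D\<^sup>\<sigma>(E)\<close> contains an edge of \<open>E\<close>.

  Conversely, a decomposable graph has a perfect elimination ordering \<open>\<sigma>\<close> (Dirac: it always has a
  simplicial vertex). Eliminating the vertices of \<open>E\<close> along \<open>\<sigma>\<close> then only ever adds edges of the
  cover, so \<open>D\<^sup>\<sigma>(E)\<close> lies inside the cover and inherits its triangle condition.
\<close>

section \<open>Induced paths and cycles\<close>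

definition induced_path :: "'a set set \<Rightarrow> 'a list \<Rightarrow> bool" where
  "induced_path E p \<longleftrightarrow> distinct p \<and>
     (\<forall>i<length p. \<forall>j<length p. {p ! i, p ! j} \<in> E \<longleftrightarrow> j = Suc i \<or> i = Suc j)"

lemma is_graph_edgeD:
  assumes "is_graph V E" "{a, b} \<in> E"
  shows "a \<in> V" "b \<in> V" "a \<noteq> b"
  using assms by (auto simp: is_graph_def)

lemma successively_shortcut:
  assumes "successively P xs" "i < j" "j < length xs" "P (xs ! i) (xs ! j)"
  shows "successively P (take (Suc i) xs @ drop j xs)"
proof -
  have "successively P (take (Suc i) xs)" "successively P (drop j xs)"
    using assms(1) successively_append_iff[of P "take (Suc i) xs" "drop (Suc i) xs"]
      successively_append_iff[of P "take j xs" "drop j xs"] by auto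
  moreover have "last (take (Suc i) xs) = xs ! i" "hd (drop j xs) = xs ! j"
    using assms(2,3) by (auto simp: take_Suc_conv_app_nth hd_drop_conv_nth)
  ultimately show ?thesis
    using assms by (simp add: successively_append_iff)
qed

lemma successively_skip_repeat:
  "successively P (xs @ [y] @ ys @ [y] @ zs) \<Longrightarrow> successively P (xs @ [y] @ zs)"
  by (auto simp: successively_append_iff successively_Cons)

lemma walk_contains_induced_path:
  assumes "is_graph V E" "p \<noteq> []" "successively (\<lambda>a b. {a, b} \<in> E) p"
  shows "\<exists>q. q \<noteq> [] \<and> hd q = hd p \<and> last q = last p \<and> set q \<subseteq> set p \<and> induced_path E q"
proof -
  define walk where "walk q \<longleftrightarrow> q \<noteq> [] \<and> hd q = hd p \<and> last q = last p \<and> set q \<subseteq> set p \<and>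
    successively (\<lambda>a b. {a, b} \<in> E) q" for q
  obtain q where "walk q" and shortest: "\<And>q'. walk q' \<Longrightarrow> length q \<le> length q'"
    using ex_has_least_nat[of walk p length] assms by (auto simp: walk_def)
  have "distinct q"
  proof (rule ccontr)
    assume "\<not> distinct q"
    then obtain xs y ys zs where q: "q = xs @ [y] @ ys @ [y] @ zs"
      using not_distinct_decomp by blast
    then have "walk (xs @ [y] @ zs)"
      using \<open>walk q\<close> successively_skip_repeat[of _ xs y ys zs] by (auto simp: walk_def hd_append)
    then show False
      using shortest q by fastforce
  qed
  have chordless: "j = Suc i" if "i < j" "j < length q" "{q ! i, q ! j} \<in> E" for i j
  proof (rule ccontr)
    assume "j \<noteq> Suc i"
    then have "walk (take (Suc i) q @ drop j q)"
      using \<open>walk q\<close> that successively_shortcut[of _ q i j] set_take_subset[of "Suc i" q]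
        set_drop_subset[of j q] by (auto simp: walk_def)
    then show False
      using shortest[of "take (Suc i) q @ drop j q"] that \<open>j \<noteq> Suc i\<close> by simp
  qed
  have "{q ! i, q ! j} \<in> E \<longleftrightarrow> j = Suc i \<or> i = Suc j" if "i < length q" "j < length q" for i j
  proof
    assume "{q ! i, q ! j} \<in> E"
    moreover have "i \<noteq> j"
      using calculation is_graph_edgeD(3)[OF assms(1)] by auto
    ultimately show "j = Suc i \<or> i = Suc j"
      using chordless that by (metis insert_commute linorder_neq_iff)
  next
    assume "j = Suc i \<or> i = Suc j"
    then show "{q ! i, q ! j} \<in> E"
      using \<open>walk q\<close> that successively_nth[of _ q] by (auto simp: walk_def insert_commute)
  qed
  then show ?thesis
    using \<open>walk q\<close> \<open>distinct q\<close> by (auto simp: walk_def induced_path_def)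
qed

lemma induced_cycle_Cons:
  assumes G: "is_graph V E" and p: "induced_path E p" and len: "3 \<le> length p"
    and "set (x # p) \<subseteq> V" "x \<notin> set p"
    and x_adj: "\<And>k. k < length p \<Longrightarrow> {x, p ! k} \<in> E \<longleftrightarrow> k = 0 \<or> k = length p - 1"
  shows "induced_cycle V E (x # p)"
proof -
  define m where "m = length p"
  have p_adj: "\<And>i j. i < m \<Longrightarrow> j < m \<Longrightarrow> {p ! i, p ! j} \<in> E \<longleftrightarrow> j = Suc i \<or> i = Suc j"
    using p by (simp add: induced_path_def m_def)
  have x_p0: "{x, p ! 0} \<in> E"
    using x_adj[of 0] len by fastforce
  have "distinct (x # p)"
    using p \<open>x \<notin> set p\<close> by (simp add: induced_path_def)
  moreover have "{(x # p) ! i, (x # p) ! ((i + 1) mod Suc m)} \<in> E" if "i < Suc m" for i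
  proof (cases i)
    case 0
    then show ?thesis using x_p0 len m_def by (cases p) auto
  next
    case (Suc k)
    show ?thesis
    proof (cases "k = m - 1")
      case True
      then have "i + 1 = Suc m"
        using Suc len m_def by linarith
      then have "(i + 1) mod Suc m = 0"
        by simp
      moreover have "{x, p ! k} \<in> E"
        using True x_adj[of k] len m_def by simp
      ultimately show ?thesis
        using Suc by (simp add: insert_commute)
    next
      case False
      then show ?thesis
        using Suc that p_adj[of k "Suc k"] by simp
    qed
  qed
  moreover have "(i + 1) mod Suc m = j \<or> (j + 1) mod Suc m = i"
    if "i < Suc m" "j < Suc m" "{(x # p) ! i, (x # p) ! j} \<in> E" for i j
  proof (cases i; cases j)
    fix k l assume "i = Suc k" "j = Suc l"
    then show ?thesis using that p_adj[of k l] by auto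
  next
    fix l assume "i = 0" "j = Suc l"
    then show ?thesis using that x_adj[of l] len m_def by auto
  next
    fix k assume "i = Suc k" "j = 0"
    then show ?thesis using that x_adj[of k] len m_def by (auto simp: insert_commute)
  qed (use that is_graph_edgeD(3)[OF G, of x x] in simp)
  ultimately show ?thesis
    using len \<open>set (x # p) \<subseteq> V\<close> by (simp add: induced_cycle_def m_def)
qed

section \<open>Perfect elimination orderings of decomposable graphs\<close>

definition simplicial :: "'a set set \<Rightarrow> 'a set \<Rightarrow> 'a \<Rightarrow> bool" where
  "simplicial E W v \<longleftrightarrow> (\<forall>a\<in>W. \<forall>b\<in>W. a \<noteq> b \<and> {v, a} \<in> E \<and> {v, b} \<in> E \<longrightarrow> {a, b} \<in> E)"

definition clique :: "'a set set \<Rightarrow> 'a set \<Rightarrow> bool" where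
  "clique E K \<longleftrightarrow> (\<forall>a\<in>K. \<forall>b\<in>K. a \<noteq> b \<longrightarrow> {a, b} \<in> E)"

definition perfect_elimination_ordering :: "'a set \<Rightarrow> 'a set set \<Rightarrow> ('a \<Rightarrow> nat) \<Rightarrow> bool" where
  "perfect_elimination_ordering V E \<sigma> \<longleftrightarrow>
     is_ordering V \<sigma> \<and> (\<forall>v\<in>V. simplicial E {u\<in>V. \<sigma> v < \<sigma> u} v)"

text \<open>
  If \<open>s\<close> and \<open>t\<close> were not adjacent, \<open>x\<close> followed by a shortest path from \<open>s\<close> to \<open>t\<close> through
  \<open>cs\<close> would be a chordless cycle.
\<close>

lemma decomposable_bridge:
  assumes D: "decomposable V E" and xs: "{x, s} \<in> E" and xt: "{x, t} \<in> E" and "s \<noteq> t"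
    and "set cs \<subseteq> V" and walk: "successively (\<lambda>a b. {a, b} \<in> E) (s # cs @ [t])"
    and avoid: "\<forall>c\<in>set cs. c \<noteq> x \<and> {x, c} \<notin> E"
  shows "{s, t} \<in> E"
proof (rule ccontr)
  assume "{s, t} \<notin> E"
  have G: "is_graph V E"
    using D by (simp add: decomposable_def)
  obtain q where "q \<noteq> []" "hd q = s" "last q = t" and q_sub: "set q \<subseteq> set (s # cs @ [t])"
    and q: "induced_path E q"
    using walk_contains_induced_path[OF G _ walk] by auto
  then have q0: "q ! 0 = s" and q_last: "q ! (length q - 1) = t" and "distinct q"
    by (auto simp: hd_conv_nth last_conv_nth induced_path_def)
  have "length q \<noteq> 1"
    using q0 q_last \<open>s \<noteq> t\<close> by auto
  moreover have "length q \<noteq> 2"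
    using q q0 q_last \<open>{s, t} \<notin> E\<close> by (auto simp: induced_path_def)
  moreover have "length q \<noteq> 0"
    using \<open>q \<noteq> []\<close> by simp
  ultimately have len: "3 \<le> length q"
    by linarith
  have qV: "set (x # q) \<subseteq> V"
    using q_sub \<open>set cs \<subseteq> V\<close> is_graph_edgeD[OF G xs] is_graph_edgeD[OF G xt] by auto
  have x_q: "x \<notin> set q"
    using q_sub avoid is_graph_edgeD(3)[OF G] xs xt by auto
  have x_adj: "{x, q ! k} \<in> E \<longleftrightarrow> k = 0 \<or> k = length q - 1" if "k < length q" for k
  proof
    assume "{x, q ! k} \<in> E"
    moreover have "q ! k \<in> set cs" if "k \<noteq> 0" "k \<noteq> length q - 1"
    proof -
      have "q ! k \<noteq> q ! 0" "q ! k \<noteq> q ! (length q - 1)"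
        using that \<open>k < length q\<close> \<open>q \<noteq> []\<close> by (simp_all add: nth_eq_iff_index_eq[OF \<open>distinct q\<close>])
      then show ?thesis
        using nth_mem[OF \<open>k < length q\<close>] q_sub q0 q_last by auto
    qed
    ultimately show "k = 0 \<or> k = length q - 1"
      using avoid by blast
  qed (use q0 q_last xs xt in auto)
  have "induced_cycle V E (x # q)"
    by (rule induced_cycle_Cons[OF G q len qV x_q x_adj])
  then show False
    using D by (auto simp: decomposable_def)
qed

lemma rtrancl_imp_walk:
  assumes "(a, b) \<in> r\<^sup>*"
  shows "\<exists>p. p \<noteq> [] \<and> hd p = a \<and> last p = b \<and> set p \<subseteq> r\<^sup>* `` {a} \<and>
    successively (\<lambda>u v. (u, v) \<in> r) p"
  using assms
proof (induction rule: rtrancl_induct)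
  case base
  show ?case
    by (intro exI[of _ "[a]"]) simp
next
  case (step b c)
  then obtain p where "p \<noteq> []" "hd p = a" "last p = b" "set p \<subseteq> r\<^sup>* `` {a}"
    "successively (\<lambda>u v. (u, v) \<in> r) p"
    by blast
  then show ?case
    using step by (intro exI[of _ "p @ [c]"]) (auto simp: successively_append_iff)
qed

lemma decomposable_component_boundary:
  assumes D: "decomposable V E" and "W \<subseteq> V"
    and R_def: "R = {y \<in> W. y \<noteq> x \<and> {x, y} \<notin> E}" and "r \<in> R"
    and C_def: "C = {(a, b). a \<in> R \<and> b \<in> R \<and> {a, b} \<in> E}\<^sup>* `` {r}"
    and S_def: "S = {s \<in> W - C. \<exists>c\<in>C. {s, c} \<in> E}"
  shows "C \<subseteq> R" and "\<forall>s\<in>S. {x, s} \<in> E" and "clique E S"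
proof -
  define Rel where "Rel = {(a, b). a \<in> R \<and> b \<in> R \<and> {a, b} \<in> E}"
  have C: "C = Rel\<^sup>* `` {r}"
    by (simp add: C_def Rel_def)
  have "(r, c) \<in> Rel\<^sup>* \<Longrightarrow> c \<in> R" for c
    by (induction rule: rtrancl_induct) (use \<open>r \<in> R\<close> Rel_def in auto)
  then show "C \<subseteq> R"
    using C by blast
  show x_S: "\<forall>s\<in>S. {x, s} \<in> E"
  proof
    fix s assume "s \<in> S"
    then obtain c where "s \<in> W" "s \<notin> C" "c \<in> C" "{s, c} \<in> E"
      using S_def by blast
    moreover have "s \<notin> R"
      using calculation \<open>C \<subseteq> R\<close> rtrancl_into_rtrancl[of r c Rel s]
      by (auto simp: C Rel_def insert_commute)
    moreover have "s \<noteq> x"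
      using calculation \<open>C \<subseteq> R\<close> R_def by (auto simp: insert_commute)
    ultimately show "{x, s} \<in> E"
      using R_def by blast
  qed
  have "sym Rel"
    by (auto simp: Rel_def sym_def insert_commute)
  show "clique E S"
    unfolding clique_def
  proof (intro ballI impI)
    fix s t assume "s \<in> S" "t \<in> S" "s \<noteq> t"
    then obtain c c' where "c \<in> C" "{s, c} \<in> E" "c' \<in> C" "{t, c'} \<in> E"
      using S_def by blast
    then have "(c, c') \<in> Rel\<^sup>*"
      using \<open>sym Rel\<close> C
      by (metis Image_singleton_iff rtrancl_trans sym_rtrancl symD)
    then obtain p where "p \<noteq> []" "hd p = c" "last p = c'" and p_C: "set p \<subseteq> C"
      and p_walk: "successively (\<lambda>u v. (u, v) \<in> Rel) p"
      using rtrancl_imp_walk[of c c' Rel] \<open>c \<in> C\<close> C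
      by (auto intro: rtrancl_trans)
    have walk: "successively (\<lambda>a b. {a, b} \<in> E) (s # p @ [t])"
      using p_walk \<open>p \<noteq> []\<close> \<open>hd p = c\<close> \<open>last p = c'\<close> \<open>{s, c} \<in> E\<close> \<open>{t, c'} \<in> E\<close>
      by (auto simp: successively_Cons successively_append_iff insert_commute Rel_def
          elim: successively_mono)
    have "set p \<subseteq> V" and avoid: "\<forall>c\<in>set p. c \<noteq> x \<and> {x, c} \<notin> E"
      using p_C \<open>C \<subseteq> R\<close> R_def \<open>W \<subseteq> V\<close> by auto
    moreover have "{x, s} \<in> E" "{x, t} \<in> E"
      using x_S \<open>s \<in> S\<close> \<open>t \<in> S\<close> by auto
    ultimately show "{s, t} \<in> E"
      using decomposable_bridge[OF D _ _ \<open>s \<noteq> t\<close> _ walk avoid] by blast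
  qed
qed

lemma clique_imp_simplicial: "clique E (W - {v}) \<Longrightarrow> simplicial E W v"
  unfolding clique_def simplicial_def by (metis Diff_iff insert_commute singletonD)

lemma not_clique_obtain_vertex:
  assumes "clique E K" "K \<subseteq> W" "\<not> clique E W"
  obtains x r where "x \<in> W" "r \<in> W" "r \<noteq> x" "{x, r} \<notin> E" "\<forall>y\<in>K. y = x \<or> {x, y} \<in> E"
proof (cases "\<exists>k\<in>K. \<exists>r\<in>W. r \<noteq> k \<and> {k, r} \<notin> E")
  case True
  then obtain k r where "k \<in> K" "r \<in> W" "r \<noteq> k" "{k, r} \<notin> E"
    by blast
  moreover have "\<forall>y\<in>K. y = k \<or> {k, y} \<in> E"
    using \<open>k \<in> K\<close> assms(1) by (auto simp: clique_def)
  ultimately show ?thesis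
    using that[of k r] assms(2) by blast
next
  case False
  obtain a b where "a \<in> W" "b \<in> W" "a \<noteq> b" "{a, b} \<notin> E"
    using assms(3) by (auto simp: clique_def)
  then show ?thesis
    using that[of a b] False by (metis insert_commute)
qed

text \<open>
  The clique \<open>K\<close> strengthens the induction (Dirac): applied to the boundary \<open>S\<close> of a component \<open>C\<close>
  of the non-neighbours of \<open>x\<close>, it forces the simplicial vertex into \<open>C\<close>, whose neighbours all lie
  in \<open>C \<union> S\<close>.
\<close>

lemma decomposable_simplicial_outside_clique:
  assumes D: "decomposable V E"
  shows "W \<subseteq> V \<Longrightarrow> K \<subseteq> W \<Longrightarrow> clique E K \<Longrightarrow> K \<noteq> W \<Longrightarrow> \<exists>v\<in>W - K. simplicial E W v"
proof (induction "card W" arbitrary: W K rule: less_induct)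
  case less
  show ?case
  proof (cases "clique E W")
    case True
    obtain v where "v \<in> W - K"
      using less.prems(2,4) by blast
    moreover have "clique E (W - {v})"
      using True by (auto simp: clique_def)
    then have "simplicial E W v"
      by (rule clique_imp_simplicial)
    ultimately show ?thesis
      by blast
  next
    case False
    then obtain x r where "x \<in> W" "r \<in> W" "r \<noteq> x" "{x, r} \<notin> E"
      and x_K: "\<forall>y\<in>K. y = x \<or> {x, y} \<in> E"
      using not_clique_obtain_vertex less.prems(2,3) by metis
    have G: "is_graph V E"
      using D by (simp add: decomposable_def)
    then have "finite W"
      using less.prems(1) finite_subset by (auto simp: is_graph_def)
    define R where "R = {y \<in> W. y \<noteq> x \<and> {x, y} \<notin> E}"
    define C where "C = {(a, b). a \<in> R \<and> b \<in> R \<and> {a, b} \<in> E}\<^sup>* `` {r}"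
    define S where "S = {s \<in> W - C. \<exists>c\<in>C. {s, c} \<in> E}"
    have "r \<in> R"
      using \<open>r \<in> W\<close> \<open>r \<noteq> x\<close> \<open>{x, r} \<notin> E\<close> by (simp add: R_def)
    note boundary = decomposable_component_boundary[OF D less.prems(1) R_def \<open>r \<in> R\<close> C_def S_def]
    have "r \<in> C" "r \<notin> S"
      by (simp_all add: C_def S_def)
    have "x \<notin> C \<union> S"
      using boundary(1,2) R_def is_graph_edgeD(3)[OF G, of x x] by auto
    then have "card (C \<union> S) < card W"
      using boundary(1) \<open>finite W\<close> \<open>x \<in> W\<close> R_def S_def
      by (intro psubset_card_mono) auto
    then obtain v where "v \<in> C" and v: "simplicial E (C \<union> S) v"
      using less.hyps[of "C \<union> S" S] less.prems(1) boundary \<open>r \<in> C\<close> \<open>r \<notin> S\<close> R_def S_def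
      by blast
    have "a \<in> C \<union> S" if "a \<in> W" "{v, a} \<in> E" for a
      using that \<open>v \<in> C\<close> by (auto simp: S_def insert_commute)
    then have "simplicial E W v"
      using v unfolding simplicial_def by blast
    moreover have "v \<in> W - K"
      using \<open>v \<in> C\<close> boundary(1) R_def x_K by auto
    ultimately show ?thesis
      by blast
  qed
qed

lemma is_ordering_insert:
  assumes "is_ordering W \<tau>" "finite W" "v \<notin> W"
  shows "is_ordering (insert v W) (\<lambda>u. if u = v then 1 else Suc (\<tau> u))"
proof -
  define \<sigma> where "\<sigma> = (\<lambda>u. if u = v then 1 else Suc (\<tau> u))"
  have "bij_betw (Suc \<circ> \<tau>) W {Suc 1..Suc (card W)}"
    using assms(1) by (auto simp: is_ordering_def intro: bij_betw_trans)
  moreover have "bij_betw \<sigma> W {Suc 1..Suc (card W)} = bij_betw (Suc \<circ> \<tau>) W {Suc 1..Suc (card W)}"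
    by (rule bij_betw_cong) (use assms(3) in \<open>auto simp: \<sigma>_def\<close>)
  ultimately have "bij_betw \<sigma> W {Suc 1..Suc (card W)}"
    by simp
  then have "bij_betw \<sigma> (W \<union> {v}) ({Suc 1..Suc (card W)} \<union> {1})"
    using notIn_Un_bij_betw3[of v W \<sigma>] assms(3) by (simp add: \<sigma>_def)
  moreover have "{Suc 1..Suc (card W)} \<union> {1} = {1..card (insert v W)}"
    using assms(2,3) by auto
  ultimately show ?thesis
    by (simp add: is_ordering_def \<sigma>_def)
qed

lemma decomposable_ex_perfect_elimination_ordering:
  assumes D: "decomposable V E"
  shows "W \<subseteq> V \<Longrightarrow> \<exists>\<sigma>. perfect_elimination_ordering W E \<sigma>"
proof (induction "card W" arbitrary: W rule: less_induct)
  case less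
  show ?case
  proof (cases "W = {}")
    case True
    then show ?thesis
      by (auto simp: perfect_elimination_ordering_def is_ordering_def bij_betw_def)
  next
    case False
    moreover have "clique E {}"
      by (simp add: clique_def)
    ultimately obtain v where "v \<in> W" and v: "simplicial E W v"
      using decomposable_simplicial_outside_clique[OF D less.prems empty_subsetI] by blast
    have "finite W"
      using D less.prems finite_subset by (auto simp: decomposable_def is_graph_def)
    then have "card (W - {v}) < card W"
      using \<open>v \<in> W\<close> by (rule card_Diff1_less)
    then obtain \<tau> where \<tau>: "perfect_elimination_ordering (W - {v}) E \<tau>"
      using less.hyps[of "W - {v}"] less.prems by blast
    define \<sigma> where "\<sigma> = (\<lambda>u. if u = v then 1 else Suc (\<tau> u))"
    have "is_ordering W \<sigma>"
      using is_ordering_insert[of "W - {v}" \<tau> v] \<tau> \<open>finite W\<close> \<open>v \<in> W\<close>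
      by (simp add: perfect_elimination_ordering_def \<sigma>_def insert_absorb)
    moreover have "simplicial E {u \<in> W. \<sigma> w < \<sigma> u} w" if "w \<in> W" for w
    proof (cases "w = v")
      case True
      then show ?thesis
        using v by (auto simp: simplicial_def)
    next
      case False
      then have "{u \<in> W. \<sigma> w < \<sigma> u} = {u \<in> W - {v}. \<tau> w < \<tau> u}"
        by (auto simp: \<sigma>_def)
      then show ?thesis
        using \<tau> that False by (simp add: perfect_elimination_ordering_def)
    qed
    ultimately show ?thesis
      unfolding perfect_elimination_ordering_def by blast
  qed
qed

section \<open>The elimination process\<close>

lemma elim_edges_mono: "i \<le> j \<Longrightarrow> elim_edges V \<sigma> E i \<subseteq> elim_edges V \<sigma> E j"
proof (induction j)
  case (Suc j)
  then show ?case
    by (cases "i = Suc j") (auto simp: Let_def)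
qed simp

lemma elim_edges_graph: "is_graph V E \<Longrightarrow> is_graph V (elim_edges V \<sigma> E i)"
proof (induction i)
  case (Suc i)
  then show ?case
    unfolding is_graph_def by (auto simp: Let_def)
qed simp

text \<open>Fill-in edges added at step \<open>j\<close> only join vertices at positions \<open>> j\<close>.\<close>

lemma elim_edges_settled:
  assumes "e \<in> elim_edges V \<sigma> E j" "z \<in> e" "\<sigma> z \<le> Suc i"
  shows "e \<in> elim_edges V \<sigma> E i"
  using assms(1)
proof (induction j)
  case (Suc j)
  show ?case
  proof (cases "e \<in> elim_edges V \<sigma> E j")
    case False
    then have "Suc j < \<sigma> z"
      using Suc.prems assms(2) by (auto simp: Let_def)
    then show ?thesis
      using Suc.prems elim_edges_mono[of "Suc j" i] assms(3) by auto
  qed (use Suc.IH in blast)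
qed (use elim_edges_mono[of 0 i] in auto)

lemma elim_edges_fill:
  assumes "is_ordering V \<sigma>" "y \<in> V" "a \<in> V" "b \<in> V" "a \<noteq> b" "\<sigma> y < \<sigma> a" "\<sigma> y < \<sigma> b"
    and "{y, a} \<in> elim_edges V \<sigma> E j" "{y, b} \<in> elim_edges V \<sigma> E j"
  shows "{a, b} \<in> elim_edges V \<sigma> E (\<sigma> y)"
proof -
  have "1 \<le> \<sigma> y"
    using assms(1,2) by (auto simp: is_ordering_def dest: bij_betw_apply)
  then obtain i where i: "\<sigma> y = Suc i"
    using Suc_le_D by auto
  have "inv_into V \<sigma> (Suc i) = y"
    using assms(1,2) i by (metis bij_betw_def inv_into_f_f is_ordering_def)
  moreover have "{y, a} \<in> elim_edges V \<sigma> E i" "{y, b} \<in> elim_edges V \<sigma> E i"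
    using elim_edges_settled[OF assms(8), of y i] elim_edges_settled[OF assms(9), of y i] i by auto
  ultimately show ?thesis
    using assms(3-7) i by (auto simp: Let_def insert_commute)
qed

lemma induced_cycle_neighbours:
  assumes "induced_cycle V E cs" "y \<in> set cs"
  obtains a b where "a \<in> set cs" "b \<in> set cs" "a \<noteq> y" "b \<noteq> y" "a \<noteq> b"
    "{y, a} \<in> E" "{y, b} \<in> E" "{a, b} \<notin> E"
proof -
  define n where "n = length cs"
  have n: "4 \<le> n" and "distinct cs"
    and cycle: "\<And>i. i < n \<Longrightarrow> {cs ! i, cs ! ((i + 1) mod n)} \<in> E"
    and chordless: "\<And>i j. i < n \<Longrightarrow> j < n \<Longrightarrow> {cs ! i, cs ! j} \<in> E \<Longrightarrow>
        (i + 1) mod n = j \<or> (j + 1) mod n = i"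
    using assms(1) by (auto simp: induced_cycle_def Let_def n_def)
  obtain k where "k < n" "cs ! k = y"
    using assms(2) by (auto simp: in_set_conv_nth n_def)
  define a where "a = (if Suc k = n then 0 else Suc k)"
  define b where "b = (if k = 0 then n - 1 else k - 1)"
  have "a < n" "b < n" "(k + 1) mod n = a" "(b + 1) mod n = k"
    using \<open>k < n\<close> n by (auto simp: a_def b_def)
  have "a \<noteq> k" "b \<noteq> k" "a \<noteq> b" "(a + 1) mod n \<noteq> b" "(b + 1) mod n \<noteq> a"
    using \<open>k < n\<close> n by (auto simp: a_def b_def mod_Suc)
  show ?thesis
  proof (rule that)
    show "cs ! a \<in> set cs" "cs ! b \<in> set cs"
      using \<open>a < n\<close> \<open>b < n\<close> by (simp_all add: n_def)
    show "cs ! a \<noteq> y" "cs ! b \<noteq> y" "cs ! a \<noteq> cs ! b"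
      using \<open>a < n\<close> \<open>b < n\<close> \<open>k < n\<close> \<open>a \<noteq> k\<close> \<open>b \<noteq> k\<close> \<open>a \<noteq> b\<close> \<open>cs ! k = y\<close> \<open>distinct cs\<close>
      by (auto simp: nth_eq_iff_index_eq n_def)
    show "{y, cs ! a} \<in> E" "{y, cs ! b} \<in> E"
      using cycle[OF \<open>k < n\<close>] cycle[OF \<open>b < n\<close>] \<open>(k + 1) mod n = a\<close> \<open>(b + 1) mod n = k\<close>
        \<open>cs ! k = y\<close> by (simp_all add: insert_commute)
    show "{cs ! a, cs ! b} \<notin> E"
      using chordless[OF \<open>a < n\<close> \<open>b < n\<close>] \<open>(a + 1) mod n \<noteq> b\<close> \<open>(b + 1) mod n \<noteq> a\<close> by blast
  qed
qed

lemma D_sigma_decomposable: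
  assumes G: "is_graph V E" and \<sigma>: "is_ordering V \<sigma>"
  shows "decomposable V (D_sigma V \<sigma> E)"
proof -
  have inj: "inj_on \<sigma> V" and \<sigma>_le: "\<And>v. v \<in> V \<Longrightarrow> \<sigma> v \<le> card V"
    using \<sigma> by (auto simp: is_ordering_def bij_betw_def)
  have "\<not> induced_cycle V (D_sigma V \<sigma> E) cs" for cs
  proof
    assume cs: "induced_cycle V (D_sigma V \<sigma> E) cs"
    then have "set cs \<subseteq> V" "cs \<noteq> []"
      by (auto simp: induced_cycle_def Let_def)
    then obtain y where "y \<in> set cs" and y_first: "\<And>z. z \<in> set cs \<Longrightarrow> \<sigma> y \<le> \<sigma> z"
      using ex_has_least_nat[of "\<lambda>z. z \<in> set cs" "hd cs" \<sigma>] by auto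
    obtain a b where ab: "a \<in> set cs" "b \<in> set cs" "a \<noteq> y" "b \<noteq> y" "a \<noteq> b"
      and "{y, a} \<in> D_sigma V \<sigma> E" "{y, b} \<in> D_sigma V \<sigma> E" "{a, b} \<notin> D_sigma V \<sigma> E"
      using induced_cycle_neighbours[OF cs \<open>y \<in> set cs\<close>] by blast
    have "\<sigma> y < \<sigma> a" "\<sigma> y < \<sigma> b" "\<sigma> a \<noteq> \<sigma> b"
      using ab y_first \<open>y \<in> set cs\<close> \<open>set cs \<subseteq> V\<close> inj by (auto simp: le_less dest: inj_onD)
    moreover have "\<sigma> a \<le> card V" "\<sigma> b \<le> card V"
      using ab \<open>set cs \<subseteq> V\<close> \<sigma>_le by auto
    ultimately have "\<sigma> y \<le> card V - 2"
      by (cases "\<sigma> a < \<sigma> b") linarith+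
    moreover have "{a, b} \<in> elim_edges V \<sigma> E (\<sigma> y)"
      using elim_edges_fill[OF \<sigma>] ab \<open>y \<in> set cs\<close> \<open>set cs \<subseteq> V\<close> \<open>\<sigma> y < \<sigma> a\<close> \<open>\<sigma> y < \<sigma> b\<close>
        \<open>{y, a} \<in> D_sigma V \<sigma> E\<close> \<open>{y, b} \<in> D_sigma V \<sigma> E\<close>
      unfolding D_sigma_def by blast
    ultimately show False
      using elim_edges_mono \<open>{a, b} \<notin> D_sigma V \<sigma> E\<close> unfolding D_sigma_def by blast
  qed
  moreover have "is_graph V (D_sigma V \<sigma> E)"
    using elim_edges_graph[OF G] by (simp add: D_sigma_def)
  ultimately show ?thesis
    by (simp add: decomposable_def)
qed

lemma elim_edges_subset_of_peo:
  assumes "E \<subseteq> Et" and peo: "perfect_elimination_ordering V Et \<sigma>"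
  shows "i \<le> card V \<Longrightarrow> elim_edges V \<sigma> E i \<subseteq> Et"
proof (induction i)
  case 0
  then show ?case
    using assms(1) by simp
next
  case (Suc i)
  define x where "x = inv_into V \<sigma> (Suc i)"
  have "Suc i \<in> \<sigma> ` V"
    using peo Suc.prems by (auto simp: perfect_elimination_ordering_def is_ordering_def bij_betw_def)
  then have "x \<in> V" "\<sigma> x = Suc i"
    by (simp_all add: x_def inv_into_into f_inv_into_f)
  then have "simplicial Et {u \<in> V. Suc i < \<sigma> u} x"
    using peo by (auto simp: perfect_elimination_ordering_def)
  moreover have "elim_edges V \<sigma> E i \<subseteq> Et"
    using Suc by simp
  ultimately show ?case
    by (auto simp: Let_def simplicial_def insert_commute simp flip: x_def)
qed

theorem lemma2:
  fixes V :: "'a set" and E :: "'a set set"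
  assumes "is_graph V E"
  shows "generalized_bartlett V E \<longleftrightarrow>
    (\<exists>Et. decomposable_cover V E Et \<and>
       (\<forall>u v w. {u, v} \<in> Et \<and> {v, w} \<in> Et \<and> {u, w} \<in> Et \<longrightarrow>
          {u, v} \<in> E \<or> {v, w} \<in> E \<or> {u, w} \<in> E))"
proof
  assume "generalized_bartlett V E"
  then obtain \<sigma> where "is_ordering V \<sigma>" and no_bad_triangle:
    "\<not> (\<exists>u v w. {u, v} \<notin> E \<and> {v, w} \<notin> E \<and> {u, w} \<notin> E \<and>
        {u, v} \<in> D_sigma V \<sigma> E \<and> {v, w} \<in> D_sigma V \<sigma> E \<and> {u, w} \<in> D_sigma V \<sigma> E)"
    unfolding generalized_bartlett_def by blast
  then have "decomposable_cover V E (D_sigma V \<sigma> E)"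
    using D_sigma_decomposable[OF assms] elim_edges_mono[of 0 "card V - 2" V \<sigma> E]
    by (simp add: decomposable_cover_def D_sigma_def)
  with no_bad_triangle show "\<exists>Et. decomposable_cover V E Et \<and>
       (\<forall>u v w. {u, v} \<in> Et \<and> {v, w} \<in> Et \<and> {u, w} \<in> Et \<longrightarrow>
          {u, v} \<in> E \<or> {v, w} \<in> E \<or> {u, w} \<in> E)"
    by blast
next
  assume "\<exists>Et. decomposable_cover V E Et \<and>
       (\<forall>u v w. {u, v} \<in> Et \<and> {v, w} \<in> Et \<and> {u, w} \<in> Et \<longrightarrow>
          {u, v} \<in> E \<or> {v, w} \<in> E \<or> {u, w} \<in> E)"
  then obtain Et where cover: "decomposable_cover V E Et" and triangles:
    "\<forall>u v w. {u, v} \<in> Et \<and> {v, w} \<in> Et \<and> {u, w} \<in> Et \<longrightarrow>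
          {u, v} \<in> E \<or> {v, w} \<in> E \<or> {u, w} \<in> E"
    by blast
  then obtain \<sigma> where peo: "perfect_elimination_ordering V Et \<sigma>"
    using decomposable_ex_perfect_elimination_ordering[of V Et V] by (auto simp: decomposable_cover_def)
  then have "D_sigma V \<sigma> E \<subseteq> Et"
    using elim_edges_subset_of_peo[of E Et] cover by (simp add: D_sigma_def decomposable_cover_def)
  then show "generalized_bartlett V E"
    using peo triangles unfolding generalized_bartlett_def perfect_elimination_ordering_def by blast
qed

end
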